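(* Let $(M,g)$ be a Ricci-flat Riemannian $4$-manifold. For $p \in M$ let $K_{max}(p)$ (respectively $K_{min}(p)$) denote the maximum (respectively the minimum) of the sectional curvatures of $2$-planes in $T_pM$. Then $$-\tfrac{1}{2}K_{min}(p) \le K_{max}(p) \le -2K_{min}(p)$$ for every $p \in M$. *)

theory Defs
  imports "HOL-Analysis.Analysis"
begin

text \<open>Pointwise model: the tangent space T_pM of a Riemannian 4-manifold is a
  4-dimensional Euclidean space; the Riemann curvature tensor at p is an
  algebraic curvature tensor R(x,y,z,w) = g(R(x,y)z, w), where
  R(x,y) = nabla_x nabla_y - nabla_y nabla_x - nabla_[x,y].\<close>

definition alg_curv_tensor :: "('v::euclidean_space \<Rightarrow> 'v \<Rightarrow> 'v \<Rightarrow> 'v \<Rightarrow> real) \<Rightarrow> bool" where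
  "alg_curv_tensor R \<longleftrightarrow>
     (\<forall>y z w. linear (\<lambda>x. R x y z w)) \<and>
     (\<forall>x z w. linear (\<lambda>y. R x y z w)) \<and>
     (\<forall>x y w. linear (\<lambda>z. R x y z w)) \<and>
     (\<forall>x y z. linear (\<lambda>w. R x y z w)) \<and>
     (\<forall>x y z w. R y x z w = - R x y z w) \<and>
     (\<forall>x y z w. R x y w z = - R x y z w) \<and>
     (\<forall>x y z w. R z w x y = R x y z w) \<and>
     (\<forall>x y z w. R x y z w + R y z x w + R z x y w = 0)"

definition ricci :: "('v::euclidean_space \<Rightarrow> 'v \<Rightarrow> 'v \<Rightarrow> 'v \<Rightarrow> real) \<Rightarrow> 'v \<Rightarrow> 'v \<Rightarrow> real" where
  "ricci R y z = (\<Sum>e\<in>Basis. R e y z e)"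

definition ricci_flat :: "('v::euclidean_space \<Rightarrow> 'v \<Rightarrow> 'v \<Rightarrow> 'v \<Rightarrow> real) \<Rightarrow> bool" where
  "ricci_flat R \<longleftrightarrow> (\<forall>y z. ricci R y z = 0)"

definition sectional :: "('v::euclidean_space \<Rightarrow> 'v \<Rightarrow> 'v \<Rightarrow> 'v \<Rightarrow> real) \<Rightarrow> 'v \<Rightarrow> 'v \<Rightarrow> real" where
  "sectional R x y = R x y y x / ((norm x)\<^sup>2 * (norm y)\<^sup>2 - (x \<bullet> y)\<^sup>2)"

definition sectional_curvatures :: "('v::euclidean_space \<Rightarrow> 'v \<Rightarrow> 'v \<Rightarrow> 'v \<Rightarrow> real) \<Rightarrow> real set" where
  "sectional_curvatures R = {sectional R x y | x y. independent {x, y} \<and> x \<noteq> y}"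

definition K_max :: "('v::euclidean_space \<Rightarrow> 'v \<Rightarrow> 'v \<Rightarrow> 'v \<Rightarrow> real) \<Rightarrow> real" where
  "K_max R = Sup (sectional_curvatures R)"

definition K_min :: "('v::euclidean_space \<Rightarrow> 'v \<Rightarrow> 'v \<Rightarrow> 'v \<Rightarrow> real) \<Rightarrow> real" where
  "K_min R = Inf (sectional_curvatures R)"

end

theory Submission
  imports Defs
begin

text \<open>Complete an orthonormal pair u, v to an orthonormal basis u, v, w_1, ..., w_(n-2).
  Tracing Ric(u, u) = 0 over this basis gives K(u, v) = -(K(u, w_1) + ... + K(u, w_(n-2))),
  so every sectional curvature is minus a sum of n - 2 sectional curvatures. Bounding each
  summand by K_min resp. K_max yields K_max \<le> -(n - 2) K_min and -(n - 2) K_max \<le> K_min,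
  which for n = 4 is the claim. Multilinearity bounds the set of sectional curvatures, so its
  Sup and Inf are the genuine extrema rather than junk values.\<close>

lemma linear_real_eq_sum_Basis:
  fixes f :: "'v::euclidean_space \<Rightarrow> real"
  assumes "linear f"
  shows "f x = (\<Sum>i\<in>Basis. (x \<bullet> i) * f i)"
  using Linear_Algebra.linear_componentwise[OF assms, of x 1] by simp

lemma linear_real_abs_le_sum_Basis:
  fixes f :: "'v::euclidean_space \<Rightarrow> real"
  assumes "linear f" and "norm x \<le> 1"
  shows "\<bar>f x\<bar> \<le> (\<Sum>i\<in>Basis. \<bar>f i\<bar>)"
proof -
  have "\<bar>f x\<bar> \<le> (\<Sum>i\<in>Basis. \<bar>x \<bullet> i\<bar> * \<bar>f i\<bar>)"
    unfolding linear_real_eq_sum_Basis[OF assms(1), of x]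
    by (metis (no_types, lifting) abs_mult sum.cong sum_abs)
  also have "\<dots> \<le> (\<Sum>i\<in>Basis. \<bar>f i\<bar>)"
    using Basis_le_norm[of _ x] assms(2)
    by (intro sum_mono mult_left_le_one_le) (auto intro: order_trans)
  finally show ?thesis .
qed

lemma Sup_Inf_bounds_of_zero_sums:
  fixes K :: "real set"
  assumes "K \<noteq> {}" "bdd_above K" "bdd_below K"
    and zero_sum: "\<And>k. k \<in> K \<Longrightarrow> \<exists>(W :: 'a set) f. card W = m \<and> f ` W \<subseteq> K \<and> k + sum f W = 0"
  shows "Sup K \<le> - real m * Inf K" and "- real m * Sup K \<le> Inf K"
proof -
  have "k \<le> - real m * Inf K \<and> - real m * Sup K \<le> k" if k: "k \<in> K" for k
  proof -
    obtain W :: "'a set" and f where W: "card W = m" "f ` W \<subseteq> K" "k + sum f W = 0"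
      using zero_sum[OF k] by blast
    have "Inf K \<le> f i" "f i \<le> Sup K" if "i \<in> W" for i
      using W(2) that assms(2,3) by (simp_all add: image_subset_iff cInf_lower cSup_upper)
    then have "real m * Inf K \<le> sum f W" "sum f W \<le> real m * Sup K"
      using sum_bounded_below[of W "Inf K" f] sum_bounded_above[of W f "Sup K"] W(1) by auto
    then show ?thesis using W(3) by linarith
  qed
  then show "Sup K \<le> - real m * Inf K" "- real m * Sup K \<le> Inf K"
    using assms(1) by (meson cSup_least cInf_greatest)+
qed

lemma orthonormal_pair_extend:
  fixes u v :: "'v::euclidean_space"
  assumes u: "norm u = 1" and v: "norm v = 1" and uv: "u \<bullet> v = 0"
  obtains W where "finite W" "card W = DIM('v) - 2" "u \<notin> W" "v \<notin> W"
    "pairwise orthogonal (insert u (insert v W))" "\<And>w. w \<in> W \<Longrightarrow> norm w = 1"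
    "span (insert u (insert v W)) = UNIV"
proof -
  define S where "S = {y. \<forall>x\<in>{u,v}. orthogonal x y}"
  have "subspace S" unfolding S_def by (rule subspace_orthogonal_to_vectors)
  then obtain W where W: "W \<subseteq> S" "pairwise orthogonal W" "\<And>x. x \<in> W \<Longrightarrow> norm x = 1"
      "independent W" "span W = S"
    using orthonormal_basis_subspace by metis
  define B where "B = insert u (insert v W)"
  have fin: "finite W" using W(4) independent_imp_finite by blast
  have uv_ne: "u \<noteq> v" using u uv by (auto simp: dot_square_norm)
  have uv_notin: "u \<notin> W" "v \<notin> W" using W(1) u v
    by (auto simp: S_def orthogonal_def dot_square_norm[symmetric])
  have orth: "pairwise orthogonal B"
    using W(1,2) uv unfolding B_def S_def pairwise_def orthogonal_def
    by (auto simp: inner_commute)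
  have norm1: "\<And>f. f \<in> B \<Longrightarrow> norm f = 1" using u v W(3) B_def by auto
  have span: "span B = UNIV"
  proof -
    have "x \<in> span B" for x
    proof -
      obtain y z where yz: "y \<in> span {u,v}" "\<And>w. w \<in> span {u,v} \<Longrightarrow> orthogonal z w" "x = y + z"
        using orthogonal_subspace_decomp_exists[of "{u,v}" x] by blast
      have "z \<in> S" unfolding S_def using yz(2)[of u] yz(2)[of v]
        by (auto simp: span_base orthogonal_commute)
      then have "z \<in> span B" using W(5) span_mono[of W B] B_def by auto
      moreover have "y \<in> span B" using yz(1) span_mono[of "{u,v}" B] B_def by auto
      ultimately show ?thesis using yz(3) span_add by blast
    qed
    then show ?thesis by auto
  qed
  have "independent B"
    using pairwise_orthogonal_independent[OF orth] norm1 by force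
  then have "card B = DIM('v)"
    using dim_eq_card[of B UNIV] span by (simp add: dim_UNIV)
  moreover have "card B = card W + 2"
    unfolding B_def using fin uv_notin uv_ne by simp
  ultimately have "card W = DIM('v) - 2" by simp
  with that show ?thesis
    using fin uv_notin orth W(3) span unfolding B_def by blast
qed

locale curvature_tensor =
  fixes R :: "'v::euclidean_space \<Rightarrow> 'v \<Rightarrow> 'v \<Rightarrow> 'v \<Rightarrow> real"
  assumes alg_curv: "alg_curv_tensor R"
begin

lemma linear_arg1: "linear (\<lambda>x. R x y z w)"
  using alg_curv unfolding alg_curv_tensor_def by (elim conjE allE)

lemma linear_arg2: "linear (\<lambda>y. R x y z w)"
  using alg_curv unfolding alg_curv_tensor_def by (elim conjE allE)

lemma linear_arg3: "linear (\<lambda>z. R x y z w)"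
  using alg_curv unfolding alg_curv_tensor_def by (elim conjE allE)

lemma linear_arg4: "linear (\<lambda>w. R x y z w)"
  using alg_curv unfolding alg_curv_tensor_def by (elim conjE allE)

lemma antisym12: "R y x z w = - R x y z w"
  using alg_curv unfolding alg_curv_tensor_def by (elim conjE allE)

lemma antisym34: "R x y w z = - R x y z w"
  using alg_curv unfolding alg_curv_tensor_def by (elim conjE allE)

lemma pair_sym: "R z w x y = R x y z w"
  using alg_curv unfolding alg_curv_tensor_def by (elim conjE allE)

lemma R_same12 [simp]: "R x x z w = 0"
  using antisym12[of x x z w] by linarith

lemma R_same34 [simp]: "R x y z z = 0"
  using antisym34[of x y z z] by linarith

lemma R_add [simp]:
  "R (x + x') y z w = R x y z w + R x' y z w"
  "R x (y + y') z w = R x y z w + R x y' z w"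
  "R x y (z + z') w = R x y z w + R x y z' w"
  "R x y z (w + w') = R x y z w + R x y z w'"
  by (simp_all add: linear_add[OF linear_arg1] linear_add[OF linear_arg2]
      linear_add[OF linear_arg3] linear_add[OF linear_arg4])

lemma R_scaleR [simp]:
  "R (c *\<^sub>R x) y z w = c * R x y z w"
  "R x (c *\<^sub>R y) z w = c * R x y z w"
  "R x y (c *\<^sub>R z) w = c * R x y z w"
  "R x y z (c *\<^sub>R w) = c * R x y z w"
  using linear_scale[OF linear_arg1] linear_scale[OF linear_arg2]
    linear_scale[OF linear_arg3] linear_scale[OF linear_arg4] by simp_all

lemma R_sum [simp]:
  "R (\<Sum>i\<in>I. f i) y z w = (\<Sum>i\<in>I. R (f i) y z w)"
  "R x y z (\<Sum>i\<in>I. f i) = (\<Sum>i\<in>I. R x y z (f i))"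
  using linear_sum[OF linear_arg1] linear_sum[OF linear_arg4] by simp_all

lemma sectional_orthonormal:
  assumes "norm u = 1" "norm v = 1" "u \<bullet> v = 0"
  shows "sectional R u v = R u v v u"
  using assms by (simp add: sectional_def)

text \<open>Gram--Schmidt: with x = a u and y = b u + c v, both the numerator and the
  Gram determinant of the sectional curvature pick up the factor (a c)^2.\<close>

lemma sectional_eq_orthonormal:
  assumes "independent {x, y}" "x \<noteq> y"
  obtains u v where "norm u = 1" "norm v = 1" "u \<bullet> v = 0" "sectional R x y = R u v v u"
proof -
  have "x \<noteq> 0" using assms dependent_zero by blast
  define a where "a = norm x"
  define u where "u = x /\<^sub>R a"
  have a: "a > 0" using \<open>x \<noteq> 0\<close> a_def by auto
  have u: "norm u = 1" and x: "x = a *\<^sub>R u" using a by (simp_all add: u_def a_def)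
  define b where "b = y \<bullet> u"
  define y' where "y' = y - b *\<^sub>R u"
  have "y' \<noteq> 0"
  proof
    assume "y' = 0"
    then have "y = (b / a) *\<^sub>R x" using x a y'_def by simp
    then have "y \<in> span ({x, y} - {y})" using assms(2) by (simp add: span_mul span_base)
    then show False using assms(1) unfolding dependent_def by blast
  qed
  define c where "c = norm y'"
  define v where "v = y' /\<^sub>R c"
  have c: "c > 0" using \<open>y' \<noteq> 0\<close> c_def by auto
  have v: "norm v = 1" and y: "y = b *\<^sub>R u + c *\<^sub>R v" using c by (simp_all add: v_def c_def y'_def)
  have uv: "u \<bullet> v = 0"
    using u by (simp add: v_def y'_def b_def inner_diff_right inner_commute dot_square_norm)
  have "R x y y x = a\<^sup>2 * c\<^sup>2 * R u v v u"
    unfolding x y by (simp add: algebra_simps power2_eq_square)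
  moreover have "(norm x)\<^sup>2 * (norm y)\<^sup>2 - (x \<bullet> y)\<^sup>2 = a\<^sup>2 * c\<^sup>2"
    using u v uv unfolding power2_norm_eq_inner x y
    by (simp add: inner_add_left inner_add_right inner_commute[of v u] algebra_simps
        power2_eq_square norm_eq_1)
  ultimately have "sectional R x y = R u v v u"
    unfolding sectional_def using a c by simp
  with u v uv that show ?thesis by blast
qed

lemma sectional_curvatures_eq:
  "sectional_curvatures R = {R u v v u | u v. norm u = 1 \<and> norm v = 1 \<and> u \<bullet> v = 0}"
proof (intro equalityI subsetI)
  fix k assume "k \<in> sectional_curvatures R"
  then obtain x y where k: "k = sectional R x y" and xy: "independent {x, y}" "x \<noteq> y"
    unfolding sectional_curvatures_def by blast
  obtain u v where "norm u = 1" "norm v = 1" "u \<bullet> v = 0" "sectional R x y = R u v v u"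
    using sectional_eq_orthonormal[OF xy] .
  then show "k \<in> {R u v v u | u v. norm u = 1 \<and> norm v = 1 \<and> u \<bullet> v = 0}"
    unfolding k by blast
next
  fix k assume "k \<in> {R u v v u | u v. norm u = 1 \<and> norm v = 1 \<and> u \<bullet> v = 0}"
  then obtain u v where uv: "norm u = 1" "norm v = 1" "u \<bullet> v = 0" and k: "k = R u v v u"
    by blast
  have "u \<noteq> v" using uv by (auto simp: dot_square_norm)
  moreover have "independent {u, v}"
    using uv by (intro pairwise_orthogonal_independent)
      (auto simp: pairwise_def orthogonal_def inner_commute)
  ultimately have "sectional R u v \<in> sectional_curvatures R"
    unfolding sectional_curvatures_def by blast
  then show "k \<in> sectional_curvatures R"
    unfolding k sectional_orthonormal[OF uv] .
qed

lemma abs_le_sum_Basis: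
  assumes "norm x \<le> 1" "norm y \<le> 1" "norm z \<le> 1" "norm w \<le> 1"
  shows "\<bar>R x y z w\<bar> \<le> (\<Sum>i\<in>Basis. \<Sum>j\<in>Basis. \<Sum>k\<in>Basis. \<Sum>l\<in>Basis. \<bar>R i j k l\<bar>)"
proof -
  have "\<bar>R x y z w\<bar> \<le> (\<Sum>i\<in>Basis. \<bar>R i y z w\<bar>)"
    using linear_real_abs_le_sum_Basis[OF linear_arg1 assms(1)] .
  also have "\<dots> \<le> (\<Sum>i\<in>Basis. \<Sum>j\<in>Basis. \<bar>R i j z w\<bar>)"
    using linear_real_abs_le_sum_Basis[OF linear_arg2 assms(2)] by (rule sum_mono)
  also have "\<dots> \<le> (\<Sum>i\<in>Basis. \<Sum>j\<in>Basis. \<Sum>k\<in>Basis. \<bar>R i j k w\<bar>)"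
    using linear_real_abs_le_sum_Basis[OF linear_arg3 assms(3)] by (intro sum_mono)
  also have "\<dots> \<le> (\<Sum>i\<in>Basis. \<Sum>j\<in>Basis. \<Sum>k\<in>Basis. \<Sum>l\<in>Basis. \<bar>R i j k l\<bar>)"
    using linear_real_abs_le_sum_Basis[OF linear_arg4 assms(4)] by (intro sum_mono)
  finally show ?thesis .
qed

lemma bdd_sectional_curvatures:
  "bdd_above (sectional_curvatures R)" "bdd_below (sectional_curvatures R)"
proof -
  define C where "C = (\<Sum>i\<in>Basis. \<Sum>j\<in>Basis. \<Sum>k\<in>Basis. \<Sum>l\<in>Basis. \<bar>R i j k l\<bar>)"
  have C: "\<bar>k\<bar> \<le> C" if "k \<in> sectional_curvatures R" for k
    using that unfolding sectional_curvatures_eq C_def by (auto intro!: abs_le_sum_Basis)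
  show "bdd_above (sectional_curvatures R)"
    by (rule bdd_aboveI[of _ C]) (use C abs_le_D1 in blast)
  show "bdd_below (sectional_curvatures R)"
    by (rule bdd_belowI[of _ "- C"]) (use C in force)
qed

lemma sectional_curvatures_nonempty:
  assumes "DIM('v) \<ge> 2"
  shows "sectional_curvatures R \<noteq> {}"
proof -
  obtain A where "A \<subseteq> (Basis :: 'v set)" "card A = 2"
    using assms obtain_subset_with_card_n by metis
  then obtain i j :: 'v where "i \<in> Basis" "j \<in> Basis" "i \<noteq> j"
    by (auto simp: card_2_iff)
  then have "R i j j i \<in> sectional_curvatures R"
    unfolding sectional_curvatures_eq by (blast intro: inner_not_same_Basis norm_Basis)
  then show ?thesis by blast
qed

lemma ricci_eq_sum_orthonormal_basis:
  assumes B: "pairwise orthogonal B" "\<And>f. f \<in> B \<Longrightarrow> norm f = 1" "finite B" "span B = UNIV"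
  shows "ricci R y z = (\<Sum>f\<in>B. R f y z f)"
proof -
  have expand: "e = (\<Sum>f\<in>B. (e \<bullet> f) *\<^sub>R f)" for e
    using orthonormal_basis_expand[OF B(1,2) _ B(3), of e] B(4) by simp
  have "ricci R y z = (\<Sum>e\<in>Basis. R e y z (\<Sum>f\<in>B. (e \<bullet> f) *\<^sub>R f))"
    unfolding ricci_def by (subst (2) expand) (rule refl)
  also have "\<dots> = (\<Sum>f\<in>B. \<Sum>e\<in>Basis. (f \<bullet> e) * R e y z f)"
    by (simp add: sum.swap[of _ Basis] inner_commute)
  also have "\<dots> = (\<Sum>f\<in>B. R (\<Sum>e\<in>Basis. (f \<bullet> e) *\<^sub>R e) y z f)"
    by simp
  also have "\<dots> = (\<Sum>f\<in>B. R f y z f)"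
    by (simp add: euclidean_representation)
  finally show ?thesis .
qed

lemma ricci_flat_sectional_zero_sum:
  assumes "ricci_flat R" and uv: "norm u = 1" "norm v = 1" "u \<bullet> v = 0"
  obtains W where "card W = DIM('v) - 2" "\<And>w. w \<in> W \<Longrightarrow> norm w = 1 \<and> u \<bullet> w = 0"
    "R u v v u + (\<Sum>w\<in>W. R u w w u) = 0"
proof -
  obtain W where W: "finite W" "card W = DIM('v) - 2" "u \<notin> W" "v \<notin> W"
    "pairwise orthogonal (insert u (insert v W))" "\<And>w. w \<in> W \<Longrightarrow> norm w = 1"
    "span (insert u (insert v W)) = UNIV"
    using orthonormal_pair_extend[OF uv] by blast
  have "u \<noteq> v" using uv by (auto simp: dot_square_norm)
  have "0 = ricci R u u" using assms(1) unfolding ricci_flat_def by simp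
  also have "\<dots> = (\<Sum>f\<in>insert u (insert v W). R f u u f)"
    by (rule ricci_eq_sum_orthonormal_basis[OF W(5) _ _ W(7)]) (use uv W(1,6) in auto)
  also have "\<dots> = R v u u v + (\<Sum>w\<in>W. R w u u w)"
    using W(1,3,4) \<open>u \<noteq> v\<close> by simp
  also have "\<dots> = R u v v u + (\<Sum>w\<in>W. R u w w u)"
    by (simp add: pair_sym)
  finally have "R u v v u + (\<Sum>w\<in>W. R u w w u) = 0" by simp
  moreover have "u \<bullet> w = 0" if "w \<in> W" for w
    using W(3,5) that unfolding pairwise_def orthogonal_def by auto
  ultimately show ?thesis using that W(2,6) by blast
qed

theorem ricci_flat_sectional_bounds:
  assumes "DIM('v) \<ge> 2" and "ricci_flat R"
  shows "K_max R \<le> - real (DIM('v) - 2) * K_min R"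
    and "- real (DIM('v) - 2) * K_max R \<le> K_min R"
proof -
  have "\<exists>(W :: 'v set) f. card W = DIM('v) - 2 \<and> f ` W \<subseteq> sectional_curvatures R \<and> k + sum f W = 0"
    if k_mem: "k \<in> sectional_curvatures R" for k
  proof -
    obtain u v where uv: "norm u = 1" "norm v = 1" "u \<bullet> v = 0" and k: "k = R u v v u"
      using k_mem unfolding sectional_curvatures_eq by blast
    obtain W where W: "card W = DIM('v) - 2" "\<And>w. w \<in> W \<Longrightarrow> norm w = 1 \<and> u \<bullet> w = 0"
      "R u v v u + (\<Sum>w\<in>W. R u w w u) = 0"
      using ricci_flat_sectional_zero_sum[OF assms(2) uv] by blast
    have "(\<lambda>w. R u w w u) ` W \<subseteq> sectional_curvatures R"
      using uv(1) W(2) unfolding sectional_curvatures_eq by blast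
    with W(1,3) show ?thesis unfolding k by blast
  qed
  from Sup_Inf_bounds_of_zero_sums[OF sectional_curvatures_nonempty[OF assms(1)]
      bdd_sectional_curvatures this]
  show "K_max R \<le> - real (DIM('v) - 2) * K_min R"
    and "- real (DIM('v) - 2) * K_max R \<le> K_min R"
    unfolding K_max_def K_min_def by blast+
qed

end

theorem corollary2p4:
  fixes R :: "'v::euclidean_space \<Rightarrow> 'v \<Rightarrow> 'v \<Rightarrow> 'v \<Rightarrow> real"
  assumes "DIM('v) = 4"
    and "alg_curv_tensor R"
    and "ricci_flat R"
  shows "- (1/2) * K_min R \<le> K_max R \<and> K_max R \<le> - 2 * K_min R"
proof -
  interpret curvature_tensor R
    using assms(2) by (rule curvature_tensor.intro)
  have "K_max R \<le> - 2 * K_min R" and "- 2 * K_max R \<le> K_min R"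
    using ricci_flat_sectional_bounds[OF _ assms(3)] assms(1) by simp_all
  then show ?thesis by linarith
qed

end
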